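(* The Exhaustive-PBS (EPBS) mechanism, which outputs the reported-welfare-maximizing assignment among the collision-free leaves of the fully expanded EPBS search tree and charges VCG-based payments $p_i(\hat\tau)=\sum_{j\neq i}\hat w_j(d^\ast_{-i})-\sum_{j\neq i}\hat w_j(d^\ast)$, where $d^\ast$ and $d^\ast_{-i}$ maximize $\sum_i\hat w_i$ and $\sum_{j\ne i}\hat w_j$ respectively over that set of leaf assignments, is strategyproof: no agent can increase her utility $u_i=w_i(d^\ast)-p_i$ by misreporting her cost $c_i$ or value $v_i$, whatever the other agents report.
   Context: Setting: graph $(V,E)$, agents $i=1,\dots,n$ with types $\tau_i=(s_i,g_i,c_i,v_i)$; only $c_i,v_i$ can be misreported; paths, feasible (vertex- and edge-conflict-free) assignments, and welfare $w_i(d)=\max(0,v_i-c_i|\pi_i^d|)$ as usual; $\hat w_i$ is welfare computed from reports. EPBS search tree: each node holds a strict partial order (priority ordering) on agents and a plan (one path per agent) in which each agent's path is a shortest path from her start to her goal avoiding conflicts with paths of all agents of higher priority. The root has the empty ordering and individually shortest paths. A node whose plan has a conflict is expanded by choosing a conflict between two agents $i,j$ and creating two children, one adding $i\succ j$ and the other $j\succ i$ to the ordering (transitively closed), each replanning paths by single-agent search. All choices (which conflict to branch on, tie-breaking among equal-length paths) are made by a fixed rule using a fixed lexicographic ordering of agents and their start/goal vertices only. The tree is expanded exhaustively until every leaf is conflict-free; the range is the set of assignments in conflict-free leaves. A mechanism is strategyproof if truthful reporting of $(c_i,v_i)$ is a dominant strategy for every agent. *)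

theory Defs
  imports Complex_Main
begin

text \<open>The agent stays at the last vertex forever.\<close>

definition is_path :: "('v \<times> 'v) set \<Rightarrow> 'v \<Rightarrow> 'v \<Rightarrow> 'v list \<Rightarrow> bool" where
  "is_path E a b \<pi> \<longleftrightarrow> \<pi> \<noteq> [] \<and> hd \<pi> = a \<and> last \<pi> = b \<and>
     (\<forall>k. Suc k < length \<pi> \<longrightarrow> \<pi> ! k = \<pi> ! Suc k \<or> (\<pi> ! k, \<pi> ! Suc k) \<in> E)"

definition path_len :: "'v list \<Rightarrow> nat" where
  "path_len \<pi> = length \<pi> - 1"

definition pos :: "'v list \<Rightarrow> nat \<Rightarrow> 'v" where
  "pos \<pi> t = \<pi> ! min t (length \<pi> - 1)"

definition conflict :: "'v list \<Rightarrow> 'v list \<Rightarrow> bool" where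
  "conflict \<pi> \<sigma> \<longleftrightarrow> (\<exists>t. pos \<pi> t = pos \<sigma> t \<or>
      (pos \<pi> t = pos \<sigma> (Suc t) \<and> pos \<pi> (Suc t) = pos \<sigma> t))"

definition has_conflict :: "nat \<Rightarrow> (nat \<Rightarrow> 'v list) \<Rightarrow> bool" where
  "has_conflict n d \<longleftrightarrow> (\<exists>i<n. \<exists>j<n. i \<noteq> j \<and> conflict (d i) (d j))"

definition shortest_avoiding :: "('v \<times> 'v) set \<Rightarrow> 'v \<Rightarrow> 'v \<Rightarrow> 'v list set \<Rightarrow> 'v list \<Rightarrow> bool" where
  "shortest_avoiding E a b S \<pi> \<longleftrightarrow> is_path E a b \<pi> \<and> (\<forall>\<sigma>\<in>S. \<not> conflict \<pi> \<sigma>) \<and>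
     (\<forall>\<pi>'. is_path E a b \<pi>' \<and> (\<forall>\<sigma>\<in>S. \<not> conflict \<pi>' \<sigma>) \<longrightarrow> path_len \<pi> \<le> path_len \<pi>')"

text \<open>Priority orderings are relations on agents; (k, i) \<in> R means k \<succ> i (k has higher priority).\<close>
definition plan_respects :: "('v \<times> 'v) set \<Rightarrow> nat \<Rightarrow> (nat \<Rightarrow> 'v) \<Rightarrow> (nat \<Rightarrow> 'v) \<Rightarrow>
    (nat \<times> nat) set \<Rightarrow> (nat \<Rightarrow> 'v list) \<Rightarrow> bool" where
  "plan_respects E n s g R d \<longleftrightarrow>
     (\<forall>i<n. shortest_avoiding E (s i) (g i) {d k | k. k < n \<and> (k, i) \<in> R} (d i))"

text \<open>A fixed EPBS rule: the root plan, the conflict-selection rule, and the replanning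
  (single-agent search with fixed tie-breaking). These are fixed functions of the ordering
  and plan of a node (for the fixed graph and start/goal vertices); they do not receive the
  reported costs/values.\<close>
definition epbs_rule :: "('v \<times> 'v) set \<Rightarrow> nat \<Rightarrow> (nat \<Rightarrow> 'v) \<Rightarrow> (nat \<Rightarrow> 'v) \<Rightarrow>
    (nat \<Rightarrow> 'v list) \<Rightarrow>
    ((nat \<times> nat) set \<Rightarrow> (nat \<Rightarrow> 'v list) \<Rightarrow> nat \<times> nat) \<Rightarrow>
    ((nat \<times> nat) set \<Rightarrow> (nat \<Rightarrow> 'v list) \<Rightarrow> (nat \<Rightarrow> 'v list) option) \<Rightarrow> bool" where
  "epbs_rule E n s g d0 pick replan \<longleftrightarrow>
     plan_respects E n s g {} d0 \<and>
     (\<forall>R d. has_conflict n d \<longrightarrow>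
        (let (i, j) = pick R d in i < n \<and> j < n \<and> i \<noteq> j \<and> conflict (d i) (d j))) \<and>
     (\<forall>R d d'. replan R d = Some d' \<longrightarrow> plan_respects E n s g R d')"

inductive_set epbs_nodes :: "nat \<Rightarrow> (nat \<Rightarrow> 'v list) \<Rightarrow>
    ((nat \<times> nat) set \<Rightarrow> (nat \<Rightarrow> 'v list) \<Rightarrow> nat \<times> nat) \<Rightarrow>
    ((nat \<times> nat) set \<Rightarrow> (nat \<Rightarrow> 'v list) \<Rightarrow> (nat \<Rightarrow> 'v list) option) \<Rightarrow>
    ((nat \<times> nat) set \<times> (nat \<Rightarrow> 'v list)) set"
  for n d0 pick replan where
  root_node: "({}, d0) \<in> epbs_nodes n d0 pick replan"
| child1: "\<lbrakk>(R, d) \<in> epbs_nodes n d0 pick replan; has_conflict n d; pick R d = (i, j);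
            R' = trancl (insert (i, j) R); \<forall>k. (k, k) \<notin> R'; replan R' d = Some d'\<rbrakk>
           \<Longrightarrow> (R', d') \<in> epbs_nodes n d0 pick replan"
| child2: "\<lbrakk>(R, d) \<in> epbs_nodes n d0 pick replan; has_conflict n d; pick R d = (i, j);
            R' = trancl (insert (j, i) R); \<forall>k. (k, k) \<notin> R'; replan R' d = Some d'\<rbrakk>
           \<Longrightarrow> (R', d') \<in> epbs_nodes n d0 pick replan"

text \<open>The range: assignments of the conflict-free (hence leaf) nodes.\<close>
definition epbs_range :: "nat \<Rightarrow> (nat \<Rightarrow> 'v list) \<Rightarrow>
    ((nat \<times> nat) set \<Rightarrow> (nat \<Rightarrow> 'v list) \<Rightarrow> nat \<times> nat) \<Rightarrow>
    ((nat \<times> nat) set \<Rightarrow> (nat \<Rightarrow> 'v list) \<Rightarrow> (nat \<Rightarrow> 'v list) option) \<Rightarrow>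
    (nat \<Rightarrow> 'v list) set" where
  "epbs_range n d0 pick replan =
     {d. \<exists>R. (R, d) \<in> epbs_nodes n d0 pick replan \<and> \<not> has_conflict n d}"

definition welfare :: "real \<Rightarrow> real \<Rightarrow> 'v list \<Rightarrow> real" where
  "welfare c v \<pi> = max 0 (v - c * real (path_len \<pi>))"

definition social_welfare :: "nat \<Rightarrow> (nat \<Rightarrow> real) \<Rightarrow> (nat \<Rightarrow> real) \<Rightarrow> (nat \<Rightarrow> 'v list) \<Rightarrow> real" where
  "social_welfare n c v d = (\<Sum>j<n. welfare (c j) (v j) (d j))"

definition others_welfare :: "nat \<Rightarrow> nat \<Rightarrow> (nat \<Rightarrow> real) \<Rightarrow> (nat \<Rightarrow> real) \<Rightarrow> (nat \<Rightarrow> 'v list) \<Rightarrow> real" where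
  "others_welfare n i c v d = (\<Sum>j\<in>{..<n} - {i}. welfare (c j) (v j) (d j))"

definition is_maximizer :: "('a \<Rightarrow> real) \<Rightarrow> 'a set \<Rightarrow> 'a \<Rightarrow> bool" where
  "is_maximizer f A x \<longleftrightarrow> x \<in> A \<and> (\<forall>y\<in>A. f y \<le> f x)"

definition vcg_payment :: "nat \<Rightarrow> nat \<Rightarrow> (nat \<Rightarrow> real) \<Rightarrow> (nat \<Rightarrow> real) \<Rightarrow>
    (nat \<Rightarrow> 'v list) \<Rightarrow> (nat \<Rightarrow> 'v list) \<Rightarrow> real" where
  "vcg_payment n i c v d dmi = others_welfare n i c v dmi - others_welfare n i c v d"

end

theory Submission
  imports Defs
begin

text \<open>The EPBS tree is built from the start and goal vertices only, so its range does not
  depend on the reported costs and values. VCG over any report-independent range is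
  strategyproof: the term of agent i's payment built from the others' optimum does not depend
  on her report, so her utility is her true welfare plus the others' reported welfare at the
  chosen outcome, up to a constant, and the truthful outcome maximises exactly that sum.\<close>

lemma social_welfare_split:
  assumes "i < n"
  shows "social_welfare n c v d = welfare (c i) (v i) (d i) + others_welfare n i c v d"
  unfolding social_welfare_def others_welfare_def
  using assms by (simp add: sum.remove)

lemma others_welfare_fun_upd [simp]:
  "others_welfare n i (c(i := a)) (v(i := b)) d = others_welfare n i c v d"
  unfolding others_welfare_def by (rule sum.cong) auto

lemma vcg_strategyproof:
  assumes "i < n"
    and truthful: "is_maximizer (social_welfare n (c(i := ci)) (v(i := vi))) A dT"
    and truthful_minus: "is_maximizer (others_welfare n i (c(i := ci)) (v(i := vi))) A dTm"
    and mis: "is_maximizer (social_welfare n (c(i := ci')) (v(i := vi'))) A dM"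
    and mis_minus: "is_maximizer (others_welfare n i (c(i := ci')) (v(i := vi'))) A dMm"
  shows "welfare ci vi (dM i) - vcg_payment n i (c(i := ci')) (v(i := vi')) dM dMm
         \<le> welfare ci vi (dT i) - vcg_payment n i (c(i := ci)) (v(i := vi)) dT dTm"
proof -
  let ?ow = "others_welfare n i c v"
  have "?ow dMm = ?ow dTm"
    using truthful_minus mis_minus unfolding is_maximizer_def
    by (metis order_antisym others_welfare_fun_upd)
  moreover have "social_welfare n (c(i := ci)) (v(i := vi)) dM
                 \<le> social_welfare n (c(i := ci)) (v(i := vi)) dT"
    using truthful mis unfolding is_maximizer_def by blast
  then have "welfare ci vi (dM i) + ?ow dM \<le> welfare ci vi (dT i) + ?ow dT"
    by (simp add: social_welfare_split[OF \<open>i < n\<close>])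
  ultimately show ?thesis
    unfolding vcg_payment_def by simp
qed

theorem mainTheorem3:
  fixes E :: "('v \<times> 'v) set" and n :: nat and s g :: "nat \<Rightarrow> 'v"
    and d0 :: "nat \<Rightarrow> 'v list"
    and pick :: "(nat \<times> nat) set \<Rightarrow> (nat \<Rightarrow> 'v list) \<Rightarrow> nat \<times> nat"
    and replan :: "(nat \<times> nat) set \<Rightarrow> (nat \<Rightarrow> 'v list) \<Rightarrow> (nat \<Rightarrow> 'v list) option"
    and i :: nat and ci vi ci' vi' :: real and rc rv :: "nat \<Rightarrow> real"
    and dT dTm dM dMm :: "nat \<Rightarrow> 'v list"
  assumes rule: "epbs_rule E n s g d0 pick replan"
    and i: "i < n"
    and truthful_out: "is_maximizer (social_welfare n (rc(i := ci)) (rv(i := vi)))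
                          (epbs_range n d0 pick replan) dT"
    and truthful_minus: "is_maximizer (others_welfare n i (rc(i := ci)) (rv(i := vi)))
                          (epbs_range n d0 pick replan) dTm"
    and mis_out: "is_maximizer (social_welfare n (rc(i := ci')) (rv(i := vi')))
                          (epbs_range n d0 pick replan) dM"
    and mis_minus: "is_maximizer (others_welfare n i (rc(i := ci')) (rv(i := vi')))
                          (epbs_range n d0 pick replan) dMm"
  shows "welfare ci vi (dM i) - vcg_payment n i (rc(i := ci')) (rv(i := vi')) dM dMm
         \<le> welfare ci vi (dT i) - vcg_payment n i (rc(i := ci)) (rv(i := vi)) dT dTm"
  using vcg_strategyproof[OF i truthful_out truthful_minus mis_out mis_minus] .

end
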